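(* Let $G$ be an undirected multigraph with minimum degree at least $3$ and let $(C,F)$ be a FVC in $G$. Then $|F|\le e(C,F)$.
   Context: The degree of a vertex counts edge-endpoints, a self-loop contributing two. For disjoint $X,Y\subseteq V(G)$, $e(X,Y)$ is the number of edges with one endpoint in $X$ and the other in $Y$. A feedback vertex cut (FVC) in $G$ is a pair of disjoint sets $C,F\subseteq V(G)$ such that $G[F]$ is a forest (self-loops and parallel edges count as cycles) and every tree $T$ of $G[F]$ satisfies $e(V(T),V(G)\setminus(C\cup F))\le1$. *)

theory Defs
  imports Main
begin

text \<open>Self-loops (fst = snd) and parallel edges are allowed.\<close>

definition multigraph :: "'v set \<Rightarrow> 'e set \<Rightarrow> ('e \<Rightarrow> 'v \<times> 'v) \<Rightarrow> bool" where
  "multigraph V E ends \<longleftrightarrow> finite V \<and> finite E \<and>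
     (\<forall>e\<in>E. fst (ends e) \<in> V \<and> snd (ends e) \<in> V)"

text \<open>Degree: number of edge-endpoints at v (a loop contributes two).\<close>
definition degree :: "'e set \<Rightarrow> ('e \<Rightarrow> 'v \<times> 'v) \<Rightarrow> 'v \<Rightarrow> nat" where
  "degree E ends v = card {e\<in>E. fst (ends e) = v} + card {e\<in>E. snd (ends e) = v}"

definition e_between :: "'e set \<Rightarrow> ('e \<Rightarrow> 'v \<times> 'v) \<Rightarrow> 'v set \<Rightarrow> 'v set \<Rightarrow> nat" where
  "e_between E ends X Y = card {e\<in>E. (fst (ends e) \<in> X \<and> snd (ends e) \<in> Y) \<or>
                                     (fst (ends e) \<in> Y \<and> snd (ends e) \<in> X)}"

definition joins :: "('e \<Rightarrow> 'v \<times> 'v) \<Rightarrow> 'e \<Rightarrow> 'v \<Rightarrow> 'v \<Rightarrow> bool" where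
  "joins ends e u v \<longleftrightarrow> ends e = (u, v) \<or> ends e = (v, u)"

definition induced_edges :: "'e set \<Rightarrow> ('e \<Rightarrow> 'v \<times> 'v) \<Rightarrow> 'v set \<Rightarrow> 'e set" where
  "induced_edges E ends S = {e\<in>E. fst (ends e) \<in> S \<and> snd (ends e) \<in> S}"

text \<open>For k = 1 this is a self-loop, for k = 2 a pair of parallel edges.\<close>
definition has_cycle :: "'e set \<Rightarrow> ('e \<Rightarrow> 'v \<times> 'v) \<Rightarrow> bool" where
  "has_cycle E ends \<longleftrightarrow> (\<exists>vs es. length vs = length es \<and> length es \<ge> 1 \<and>
      distinct vs \<and> distinct es \<and> set es \<subseteq> E \<and>
      (\<forall>i<length es. joins ends (es ! i) (vs ! i) (vs ! ((i + 1) mod length es))))"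

definition is_forest_on :: "'e set \<Rightarrow> ('e \<Rightarrow> 'v \<times> 'v) \<Rightarrow> 'v set \<Rightarrow> bool" where
  "is_forest_on E ends F \<longleftrightarrow> \<not> has_cycle (induced_edges E ends F) ends"

definition component :: "'e set \<Rightarrow> ('e \<Rightarrow> 'v \<times> 'v) \<Rightarrow> 'v set \<Rightarrow> 'v \<Rightarrow> 'v set" where
  "component E ends F v =
     {u. (v, u) \<in> ({(x, y). \<exists>e\<in>induced_edges E ends F. joins ends e x y})\<^sup>*}"

definition FVC :: "'v set \<Rightarrow> 'e set \<Rightarrow> ('e \<Rightarrow> 'v \<times> 'v) \<Rightarrow> 'v set \<Rightarrow> 'v set \<Rightarrow> bool" where
  "FVC V E ends C F \<longleftrightarrow> C \<subseteq> V \<and> F \<subseteq> V \<and> C \<inter> F = {} \<and>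
     is_forest_on E ends F \<and>
     (\<forall>v\<in>F. e_between E ends (component E ends F v) (V - (C \<union> F)) \<le> 1)"

end

theory Submission
  imports Defs
begin

(* Contract all vertices outside C \<union> F to a single vertex. Since every tree of G[F] has at most
   one edge leaving C \<union> F, the edges inside F together with the edges from F to the outside form
   a forest on |F| + 1 vertices, so there are at most |F| of them. Summing degrees over F then gives
   3|F| \<le> 2|E(G[F])| + e(F, outside) + e(C, F) \<le> 2|F| + e(C, F). *)

definition incident_edges :: "'e set \<Rightarrow> ('e \<Rightarrow> 'v \<times> 'v) \<Rightarrow> 'v \<Rightarrow> 'e set" where
  "incident_edges E ends v = {e\<in>E. fst (ends e) = v \<or> snd (ends e) = v}"

definition edges_between :: "'e set \<Rightarrow> ('e \<Rightarrow> 'v \<times> 'v) \<Rightarrow> 'v set \<Rightarrow> 'v set \<Rightarrow> 'e set" where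
  "edges_between E ends X Y =
     {e\<in>E. (fst (ends e) \<in> X \<and> snd (ends e) \<in> Y) \<or> (fst (ends e) \<in> Y \<and> snd (ends e) \<in> X)}"

definition is_path :: "'e set \<Rightarrow> ('e \<Rightarrow> 'v \<times> 'v) \<Rightarrow> 'v set \<Rightarrow> 'v list \<Rightarrow> 'e list \<Rightarrow> bool" where
  "is_path E ends V vs es \<longleftrightarrow> length vs = Suc (length es) \<and> distinct vs \<and> distinct es \<and>
     set es \<subseteq> E \<and> set vs \<subseteq> V \<and> (\<forall>i<length es. joins ends (es ! i) (vs ! i) (vs ! Suc i))"

definition is_cycle :: "'e set \<Rightarrow> ('e \<Rightarrow> 'v \<times> 'v) \<Rightarrow> 'v list \<Rightarrow> 'e list \<Rightarrow> bool" where
  "is_cycle E ends vs es \<longleftrightarrow> length vs = length es \<and> es \<noteq> [] \<and> distinct vs \<and> distinct es \<and>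
     set es \<subseteq> E \<and> (\<forall>i<length es. joins ends (es ! i) (vs ! i) (vs ! (Suc i mod length es)))"

lemma e_between_eq_card: "e_between E ends X Y = card (edges_between E ends X Y)"
  by (simp add: e_between_def edges_between_def)

lemma e_between_commute: "e_between E ends X Y = e_between E ends Y X"
  unfolding e_between_def by (metis (no_types, lifting))

lemma e_between_Un:
  assumes "finite E" "S \<inter> X = {}" "X \<inter> Y = {}"
  shows "e_between E ends S (X \<union> Y) = e_between E ends S X + e_between E ends S Y"
proof -
  have "edges_between E ends S (X \<union> Y) = edges_between E ends S X \<union> edges_between E ends S Y"
    by (auto simp: edges_between_def)
  moreover have "edges_between E ends S X \<inter> edges_between E ends S Y = {}"
    using assms(2,3) by (auto simp: edges_between_def)
  moreover have "finite (edges_between E ends S Z)" for Z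
    using assms(1) by (simp add: edges_between_def)
  ultimately show ?thesis
    unfolding e_between_eq_card by (simp add: card_Un_disjoint)
qed

lemma has_cycle_iff_is_cycle: "has_cycle E ends \<longleftrightarrow> (\<exists>vs es. is_cycle E ends vs es)"
  by (auto simp: has_cycle_def is_cycle_def Suc_le_eq)

lemma has_cycle_mono: "E' \<subseteq> E \<Longrightarrow> has_cycle E' ends \<Longrightarrow> has_cycle E ends"
  unfolding has_cycle_def by blast

lemma joins_sym: "joins ends e u v \<longleftrightarrow> joins ends e v u"
  unfolding joins_def by auto

lemma is_cycle_rotate:
  assumes "is_cycle E ends vs es"
  shows "is_cycle E ends (rotate p vs) (rotate p es)"
proof -
  let ?k = "length es"
  have "joins ends (rotate p es ! i) (rotate p vs ! i) (rotate p vs ! (Suc i mod ?k))" if "i < ?k" for i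
  proof -
    let ?j = "(p + i) mod ?k"
    have "?j < ?k"
      using that by (intro mod_less_divisor) linarith
    then have "joins ends (es ! ?j) (vs ! ?j) (vs ! (Suc ?j mod ?k))"
      using assms by (simp add: is_cycle_def)
    moreover have "Suc ?j mod ?k = (p + Suc i mod ?k) mod ?k"
      by (simp add: mod_Suc_eq mod_add_right_eq)
    ultimately show ?thesis
      using assms that by (simp add: is_cycle_def nth_rotate)
  qed
  then show ?thesis
    using assms by (simp add: is_cycle_def)
qed

lemma length_path_less_card:
  assumes "finite V" "is_path E ends V vs es"
  shows "length es < card V"
proof -
  have "length vs = card (set vs)"
    using assms(2) by (simp add: is_path_def distinct_card)
  also have "\<dots> \<le> card V"
    using assms by (simp add: is_path_def card_mono)
  finally show ?thesis
    using assms(2) by (simp add: is_path_def)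
qed

lemma ex_longest_path:
  assumes "finite V" "v \<in> V"
  obtains vs es where "is_path E ends V vs es"
    and "\<And>vs' es'. is_path E ends V vs' es' \<Longrightarrow> length es' \<le> length es"
proof -
  have "is_path E ends V [v] []"
    using assms(2) by (simp add: is_path_def)
  then have "\<exists>p. case_prod (is_path E ends V) p \<and>
      (\<forall>q. case_prod (is_path E ends V) q \<longrightarrow> length (snd q) \<le> length (snd p))"
    using length_path_less_card[OF assms(1)]
    by (intro ex_has_greatest_nat[where b = "card V"]) auto
  then show ?thesis
    using that by auto
qed

lemma last_of_path: "is_path E ends V vs es \<Longrightarrow> last vs = vs ! length es"
  by (metis is_path_def diff_Suc_1 last_conv_nth list.size(3) nat.distinct(1))

lemma is_path_snoc:
  assumes "is_path E ends V vs es" "f \<in> E" "f \<notin> set es" "z \<in> V" "z \<notin> set vs"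
    and "joins ends f (last vs) z"
  shows "is_path E ends V (vs @ [z]) (es @ [f])"
  using assms last_of_path[OF assms(1)] by (auto simp: is_path_def nth_append less_Suc_eq)

lemma is_cycle_close_path:
  assumes "is_path E ends V vs es" "f \<in> E" "f \<notin> set es" "j < length vs"
    and "joins ends f (last vs) (vs ! j)"
  shows "is_cycle E ends (drop j vs) (drop j es @ [f])"
proof -
  let ?k = "Suc (length es) - j"
  have lengths: "length vs = Suc (length es)" "length (drop j es @ [f]) = ?k"
    using assms(1,4) by (auto simp: is_path_def)
  have "joins ends ((drop j es @ [f]) ! i) (drop j vs ! i) (drop j vs ! (Suc i mod ?k))"
    if "i < ?k" for i
  proof (cases "Suc i < ?k")
    case True
    then show ?thesis
      using assms(1,4) by (auto simp: is_path_def nth_append)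
  next
    case False
    then have "i = length es - j" "Suc i = ?k"
      using that assms(4) lengths by auto
    then show ?thesis
      using assms(4,5) lengths last_of_path[OF assms(1)] by (simp add: nth_append)
  qed
  then show ?thesis
    using assms lengths by (auto simp: is_cycle_def is_path_def dest: in_set_dropD)
qed

lemma path_edge_incident_to_last:
  assumes "is_path E ends V vs es" "e \<in> set es" "e \<in> incident_edges E ends (last vs)"
  shows "e = last es"
proof -
  obtain i where i: "i < length es" "es ! i = e"
    using assms(2) by (metis in_set_conv_nth)
  have "Suc i = length es"
  proof (rule ccontr)
    assume "Suc i \<noteq> length es"
    then have "vs ! i \<noteq> last vs" "vs ! Suc i \<noteq> last vs"
      using assms(1) i(1) by (auto simp: last_of_path is_path_def nth_eq_iff_index_eq)
    moreover have "joins ends e (vs ! i) (vs ! Suc i)"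
      using assms(1) i by (auto simp: is_path_def)
    ultimately show False
      using assms(3) by (auto simp: joins_def incident_edges_def)
  qed
  then show ?thesis
    using i by (metis diff_Suc_1 last_conv_nth list.size(3) nat.distinct(1))
qed

lemma ex_unused_edge_at_last:
  assumes "is_path E ends V vs es" "2 \<le> card (incident_edges E ends (last vs))"
  obtains f z where "f \<in> E" "f \<notin> set es" "joins ends f (last vs) z"
proof -
  have "\<not> incident_edges E ends (last vs) \<subseteq> {last es}"
    using assms(2) card_mono[of "{last es}" "incident_edges E ends (last vs)"] by auto
  then obtain f where f: "f \<in> incident_edges E ends (last vs)" "f \<noteq> last es"
    by blast
  then have "f \<in> E" "f \<notin> set es"
    using path_edge_incident_to_last[OF assms(1)] by (auto simp: incident_edges_def)
  moreover obtain z where "joins ends f (last vs) z"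
    using f(1) by (cases "ends f") (auto simp: incident_edges_def joins_def)
  ultimately show ?thesis
    using that by blast
qed

lemma has_cycle_if_incident_ge_2:
  assumes "multigraph V E ends" "V \<noteq> {}" "\<forall>v\<in>V. 2 \<le> card (incident_edges E ends v)"
  shows "has_cycle E ends"
proof -
  have "finite V"
    using assms(1) by (simp add: multigraph_def)
  moreover obtain v where "v \<in> V"
    using assms(2) by blast
  ultimately obtain vs es where path: "is_path E ends V vs es"
    and longest: "\<And>vs' es'. is_path E ends V vs' es' \<Longrightarrow> length es' \<le> length es"
    by (rule ex_longest_path[where E = E and ends = ends]) blast+
  have "last vs \<in> V"
    using path by (metis is_path_def last_in_set list.size(3) nat.distinct(1) subsetD)
  then obtain f z where f: "f \<in> E" "f \<notin> set es" and z: "joins ends f (last vs) z"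
    using ex_unused_edge_at_last[OF path] assms(3) by blast
  show ?thesis
  proof (cases "z \<in> set vs")
    case True
    then obtain j where "j < length vs" "vs ! j = z"
      by (metis in_set_conv_nth)
    then have "is_cycle E ends (drop j vs) (drop j es @ [f])"
      using is_cycle_close_path[OF path f] z by simp
    then show ?thesis
      by (auto simp: has_cycle_iff_is_cycle)
  next
    case False
    have "z \<in> V"
      using assms(1) f(1) z by (auto simp: multigraph_def joins_def)
    then have "is_path E ends V (vs @ [z]) (es @ [f])"
      using is_path_snoc[OF path f _ False z] by simp
    then show ?thesis
      using longest[of "vs @ [z]" "es @ [f]"] by simp
  qed
qed

lemma has_cycle_if_loop: "e \<in> E \<Longrightarrow> ends e = (v, v) \<Longrightarrow> has_cycle E ends"
  unfolding has_cycle_iff_is_cycle is_cycle_def joins_def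
  by (intro exI[of _ "[v]"] exI[of _ "[e]"]) simp

lemma card_edges_less_card_vertices_if_acyclic:
  assumes "multigraph V E ends" "V \<noteq> {}" "\<not> has_cycle E ends"
  shows "card E < card V"
proof -
  have "finite V"
    using assms(1) by (simp add: multigraph_def)
  then show ?thesis
    using assms
  proof (induction V arbitrary: E rule: finite_remove_induct)
    case empty
    then show ?case by simp
  next
    case (remove V)
    have "\<not> (\<forall>v\<in>V. 2 \<le> card (incident_edges E ends v))"
      using has_cycle_if_incident_ge_2 remove.prems by blast
    then obtain v where v: "v \<in> V" "card (incident_edges E ends v) \<le> 1"
      by force
    have finite: "finite E" "finite V"
      using remove.prems(1) by (auto simp: multigraph_def)
    show ?case
    proof (cases "V - {v} = {}")
      case True
      have "e \<notin> E" for e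
      proof
        assume "e \<in> E"
        then have "ends e = (v, v)"
          using remove.prems(1) True by (auto simp: multigraph_def prod_eq_iff)
        then show False
          using has_cycle_if_loop[OF \<open>e \<in> E\<close>, of ends] remove.prems(3) by simp
      qed
      then have "E = {}"
        by blast
      then show ?thesis
        using v(1) finite card_gt_0_iff by auto
    next
      case False
      let ?E' = "E - incident_edges E ends v"
      have "multigraph (V - {v}) ?E' ends"
        using remove.prems(1) by (auto simp: multigraph_def incident_edges_def)
      moreover have "\<not> has_cycle ?E' ends"
        using remove.prems(3) has_cycle_mono[of ?E' E] by blast
      ultimately have "card ?E' < card (V - {v})"
        using remove.IH[OF v(1)] False by presburger
      moreover have "E = ?E' \<union> incident_edges E ends v"
        by (auto simp: incident_edges_def)
      then have "card E \<le> card ?E' + card (incident_edges E ends v)"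
        by (metis card_Un_le)
      ultimately show ?thesis
        using v finite by (simp add: card_Diff_singleton)
    qed
  qed
qed

definition contract_outside :: "'v set \<Rightarrow> ('e \<Rightarrow> 'v \<times> 'v) \<Rightarrow> 'e \<Rightarrow> 'v option \<times> 'v option" where
  "contract_outside F ends e = map_prod (Some |` F) (Some |` F) (ends e)"

lemma joins_contract_outside_Some_Some:
  "joins (contract_outside F ends) e (Some a) (Some b) \<longleftrightarrow> a \<in> F \<and> b \<in> F \<and> joins ends e a b"
  by (cases "ends e") (auto simp: contract_outside_def joins_def restrict_map_def)

lemma joins_contract_outside_Some_None:
  "joins (contract_outside F ends) e (Some a) None \<longleftrightarrow>
     a \<in> F \<and> (fst (ends e) = a \<and> snd (ends e) \<notin> F \<or> fst (ends e) \<notin> F \<and> snd (ends e) = a)"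
  by (cases "ends e") (auto simp: contract_outside_def joins_def restrict_map_def)

lemma joins_contract_outside_None_None:
  "joins (contract_outside F ends) e None None \<longleftrightarrow> fst (ends e) \<notin> F \<and> snd (ends e) \<notin> F"
  by (cases "ends e") (auto simp: contract_outside_def joins_def restrict_map_def)

lemma contracted_edge_to_outside:
  assumes "e \<in> induced_edges E ends F \<union> edges_between E ends F R"
    and "joins (contract_outside F ends) e (Some a) None"
  shows "a \<in> F" "e \<in> edges_between E ends {a} R"
  using assms by (auto simp: joins_contract_outside_Some_None induced_edges_def edges_between_def)

lemma contracted_edge_not_loop_outside:
  "e \<in> induced_edges E ends F \<union> edges_between E ends F R \<Longrightarrow>
     \<not> joins (contract_outside F ends) e None None"
  by (auto simp: joins_contract_outside_None_None induced_edges_def edges_between_def)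

lemma is_cycle_uncontract:
  assumes "is_cycle E' (contract_outside F ends) vs es" "None \<notin> set vs" "E' \<subseteq> E"
  shows "is_cycle (induced_edges E ends F) ends (map the vs) es"
proof -
  let ?k = "length es"
  have Some: "vs ! i = Some (map the vs ! i)" if "i < ?k" for i
    using assms(1,2) that by (metis is_cycle_def nth_map nth_mem option.collapse)
  have "joins ends (es ! i) (map the vs ! i) (map the vs ! (Suc i mod ?k)) \<and> es ! i \<in> induced_edges E ends F"
    if "i < ?k" for i
  proof -
    have "Suc i mod ?k < ?k"
      using that by (intro mod_less_divisor) linarith
    then have "joins (contract_outside F ends) (es ! i)
        (Some (map the vs ! i)) (Some (map the vs ! (Suc i mod ?k)))"
      using assms(1) that Some[of i] Some[of "Suc i mod ?k"] by (simp add: is_cycle_def)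
    then have "map the vs ! i \<in> F" "map the vs ! (Suc i mod ?k) \<in> F"
      "joins ends (es ! i) (map the vs ! i) (map the vs ! (Suc i mod ?k))"
      by (simp_all only: joins_contract_outside_Some_Some)
    moreover have "es ! i \<in> E"
      using assms(1,3) that by (auto simp: is_cycle_def dest: nth_mem)
    ultimately show ?thesis
      by (auto simp: induced_edges_def joins_def)
  qed
  moreover have "distinct (map the vs)"
    using assms(1,2) by (auto simp: is_cycle_def distinct_map inj_on_def) (metis option.collapse)
  ultimately show ?thesis
    using assms(1) by (auto simp: is_cycle_def in_set_conv_nth)
qed

lemma is_cycle_nth_Some:
  assumes "is_cycle E ends vs es" "vs ! 0 = None" "0 < i" "i < length es"
  shows "vs ! i = Some (the (vs ! i))"
proof -
  have "vs ! i \<noteq> vs ! 0"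
    using assms(1,3,4) by (simp add: is_cycle_def nth_eq_iff_index_eq)
  then show ?thesis
    using assms(2) by auto
qed

lemma contracted_cycle_interior_in_component:
  assumes "is_cycle E' (contract_outside F ends) vs es" "E' \<subseteq> E" "vs ! 0 = None" "2 \<le> length es"
  shows "the (vs ! (length es - 1)) \<in> component E ends F (the (vs ! 1))"
proof -
  let ?k = "length es"
  let ?rel = "{(x, y). \<exists>e\<in>induced_edges E ends F. joins ends e x y}"
  have "(the (vs ! Suc i), the (vs ! Suc (Suc i))) \<in> ?rel" if "i < ?k - 2" for i
  proof -
    have i: "Suc i < ?k" "Suc (Suc i) < ?k"
      using that by arith+
    have "joins (contract_outside F ends) (es ! Suc i) (vs ! Suc i) (vs ! (Suc (Suc i) mod ?k))"
      using assms(1) i(1) unfolding is_cycle_def by blast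
    then have "joins (contract_outside F ends) (es ! Suc i)
        (Some (the (vs ! Suc i))) (Some (the (vs ! Suc (Suc i))))"
      using i is_cycle_nth_Some[OF assms(1,3) zero_less_Suc i(1)]
        is_cycle_nth_Some[OF assms(1,3) zero_less_Suc i(2)] by simp
    then have "joins ends (es ! Suc i) (the (vs ! Suc i)) (the (vs ! Suc (Suc i)))"
      and "the (vs ! Suc i) \<in> F" "the (vs ! Suc (Suc i)) \<in> F"
      by (simp_all only: joins_contract_outside_Some_Some)
    moreover have "es ! Suc i \<in> E"
      using assms(1,2) i(1) by (auto simp: is_cycle_def dest: nth_mem)
    ultimately show ?thesis
      by (auto simp: induced_edges_def joins_def)
  qed
  then have "(the (vs ! 1), the (vs ! (?k - 1))) \<in> ?rel ^^ (?k - 2)"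
    unfolding relpow_fun_conv using assms(4)
    by (intro exI[of _ "\<lambda>i. the (vs ! Suc i)"]) (auto simp: Suc_diff_Suc numeral_2_eq_2)
  then show ?thesis
    by (auto simp: component_def dest: relpow_imp_rtrancl)
qed

lemma FVC_no_cycle_through_contracted_vertex:
  assumes "finite E" "FVC V E ends C F"
    and "is_cycle (induced_edges E ends F \<union> edges_between E ends F (V - (C \<union> F)))
           (contract_outside F ends) vs es"
    and "vs ! 0 = None"
  shows False
proof -
  let ?R = "V - (C \<union> F)"
  let ?k = "length es"
  have step: "joins (contract_outside F ends) (es ! i) (vs ! i) (vs ! (Suc i mod ?k))" if "i < ?k" for i
    using assms(3) that by (simp add: is_cycle_def)
  have edge: "es ! i \<in> induced_edges E ends F \<union> edges_between E ends F ?R" if "i < ?k" for i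
    using assms(3) that by (auto simp: is_cycle_def dest: nth_mem)
  have "0 < ?k"
    using assms(3) by (simp add: is_cycle_def)
  moreover have "?k \<noteq> 1"
  proof
    assume "?k = 1"
    then have "joins (contract_outside F ends) (es ! 0) None None"
      using step[of 0] assms(4) by simp
    then show False
      using contracted_edge_not_loop_outside[OF edge[OF \<open>0 < ?k\<close>]] by contradiction
  qed
  ultimately have k: "2 \<le> ?k" "?k - 1 < ?k" "Suc (?k - 1) = ?k"
    by linarith+
  define w where "w = the (vs ! 1)"
  define u where "u = the (vs ! (?k - 1))"
  have "joins (contract_outside F ends) (es ! 0) (Some w) None"
    using step[of 0] \<open>0 < ?k\<close> k is_cycle_nth_Some[OF assms(3,4), of 1] assms(4)
    by (simp add: w_def joins_sym)
  then have w: "w \<in> F" "es ! 0 \<in> edges_between E ends {w} ?R"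
    using contracted_edge_to_outside[OF edge[OF \<open>0 < ?k\<close>]] by blast+
  have "joins (contract_outside F ends) (es ! (?k - 1)) (Some u) None"
    using step[of "?k - 1"] k is_cycle_nth_Some[OF assms(3,4), of "?k - 1"] assms(4)
    by (simp add: u_def)
  then have u: "es ! (?k - 1) \<in> edges_between E ends {u} ?R"
    using contracted_edge_to_outside(2)[OF edge[OF k(2)]] by blast
  have "u \<in> component E ends F w" "w \<in> component E ends F w"
    using contracted_cycle_interior_in_component[OF assms(3) _ assms(4) k(1)]
    by (auto simp: u_def w_def component_def induced_edges_def edges_between_def)
  then have "{es ! 0, es ! (?k - 1)} \<subseteq> edges_between E ends (component E ends F w) ?R"
    using u w(2) by (auto simp: edges_between_def)
  moreover have "es ! 0 \<noteq> es ! (?k - 1)"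
    using assms(3) k by (simp add: is_cycle_def nth_eq_iff_index_eq)
  moreover have "finite (edges_between E ends (component E ends F w) ?R)"
    using assms(1) by (simp add: edges_between_def)
  ultimately have "2 \<le> e_between E ends (component E ends F w) ?R"
    unfolding e_between_eq_card by (metis card_2_iff card_mono)
  moreover have "e_between E ends (component E ends F w) ?R \<le> 1"
    using assms(2) w(1) by (simp add: FVC_def)
  ultimately show False
    by simp
qed

lemma FVC_contraction_acyclic:
  assumes "finite E" "FVC V E ends C F"
  shows "\<not> has_cycle (induced_edges E ends F \<union> edges_between E ends F (V - (C \<union> F)))
           (contract_outside F ends)"
proof
  let ?E' = "induced_edges E ends F \<union> edges_between E ends F (V - (C \<union> F))"
  assume "has_cycle ?E' (contract_outside F ends)"
  then obtain vs es where cycle: "is_cycle ?E' (contract_outside F ends) vs es"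
    by (auto simp: has_cycle_iff_is_cycle)
  show False
  proof (cases "None \<in> set vs")
    case True
    then obtain p where "p < length vs" "vs ! p = None"
      by (metis in_set_conv_nth)
    moreover have "0 < length vs"
      using \<open>p < length vs\<close> by linarith
    ultimately have "rotate p vs ! 0 = None"
      by (simp add: nth_rotate)
    then show False
      using FVC_no_cycle_through_contracted_vertex[OF assms is_cycle_rotate[OF cycle]] by blast
  next
    case False
    have "?E' \<subseteq> E"
      by (auto simp: induced_edges_def edges_between_def)
    then have "is_cycle (induced_edges E ends F) ends (map the vs) es"
      using is_cycle_uncontract[OF cycle False] by blast
    then show False
      using assms(2) by (auto simp: FVC_def is_forest_on_def has_cycle_iff_is_cycle)
  qed
qed

lemma FVC_card_induced_edges_add_e_between_le:
  assumes "multigraph V E ends" "FVC V E ends C F"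
  shows "card (induced_edges E ends F) + e_between E ends F (V - (C \<union> F)) \<le> card F"
proof -
  let ?I = "induced_edges E ends F" and ?X = "edges_between E ends F (V - (C \<union> F))"
  have finite: "finite E" "finite F"
    using assms finite_subset by (auto simp: multigraph_def FVC_def)
  have "multigraph (insert None (Some ` F)) (?I \<union> ?X) (contract_outside F ends)"
    using finite by (auto simp: multigraph_def contract_outside_def restrict_map_def
        induced_edges_def edges_between_def)
  then have "card (?I \<union> ?X) < card (insert None (Some ` F))"
    using card_edges_less_card_vertices_if_acyclic FVC_contraction_acyclic[OF finite(1) assms(2)]
    by blast
  moreover have "card (?I \<union> ?X) = card ?I + card ?X"
    using finite(1) by (intro card_Un_disjoint) (auto simp: induced_edges_def edges_between_def)
  moreover have "card (insert None (Some ` F)) = card F + 1"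
    using finite(2) by (simp add: card_image)
  ultimately show ?thesis
    by (simp add: e_between_eq_card)
qed

lemma sum_degree_on_subset:
  assumes "multigraph V E ends" "S \<subseteq> V"
  shows "(\<Sum>v\<in>S. degree E ends v) = 2 * card (induced_edges E ends S) + e_between E ends S (V - S)"
proof -
  let ?A = "{e\<in>E. fst (ends e) \<in> S}" and ?B = "{e\<in>E. snd (ends e) \<in> S}"
  have finite: "finite E" "finite S"
    using assms finite_subset by (auto simp: multigraph_def)
  have "(\<Sum>v\<in>S. card {e\<in>E. f e = v}) = card {e\<in>E. f e \<in> S}" for f
    using finite by (subst card_UN_disjoint[symmetric]) (auto intro: arg_cong[where f = card])
  then have "(\<Sum>v\<in>S. degree E ends v) = card ?A + card ?B"
    by (simp add: degree_def sum.distrib)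
  also have "\<dots> = card (?A \<union> ?B) + card (?A \<inter> ?B)"
    using finite(1) by (intro card_Un_Int) auto
  also have "?A \<inter> ?B = induced_edges E ends S"
    by (auto simp: induced_edges_def)
  also have "?A \<union> ?B = induced_edges E ends S \<union> edges_between E ends S (V - S)"
    using assms(1) by (auto simp: multigraph_def induced_edges_def edges_between_def)
  also have "card \<dots> = card (induced_edges E ends S) + e_between E ends S (V - S)"
    using finite(1) unfolding e_between_eq_card
    by (intro card_Un_disjoint) (auto simp: induced_edges_def edges_between_def)
  finally show ?thesis
    by simp
qed

theorem lemma19:
  fixes V :: "'v set" and E :: "'e set" and ends :: "'e \<Rightarrow> 'v \<times> 'v"
  assumes "multigraph V E ends"
    and "\<forall>v\<in>V. degree E ends v \<ge> 3"
    and "FVC V E ends C F"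
  shows "card F \<le> e_between E ends C F"
proof -
  let ?R = "V - (C \<union> F)"
  have "F \<subseteq> V" "C \<inter> F = {}" "V - F = C \<union> ?R" "finite E"
    using assms(1,3) by (auto simp: FVC_def multigraph_def)
  have "3 * card F = (\<Sum>v\<in>F. 3)"
    by simp
  also have "\<dots> \<le> (\<Sum>v\<in>F. degree E ends v)"
    using assms(2) \<open>F \<subseteq> V\<close> by (intro sum_mono) auto
  also have "\<dots> = 2 * card (induced_edges E ends F) + e_between E ends F (C \<union> ?R)"
    using sum_degree_on_subset[OF assms(1) \<open>F \<subseteq> V\<close>] \<open>V - F = C \<union> ?R\<close> by simp
  also have "\<dots> = 2 * card (induced_edges E ends F) + e_between E ends C F + e_between E ends F ?R"
    using e_between_Un[OF \<open>finite E\<close>, of F C ?R ends] \<open>C \<inter> F = {}\<close> e_between_commute[of E ends F C]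
    by auto
  finally show ?thesis
    using FVC_card_induced_edges_add_e_between_le[OF assms(1,3)] by linarith
qed

end
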